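(* Let $f\in\mathbb{R}[\mathbf{x}]$, $\mathscr{A}=\operatorname{supp}(f)$, let $\mathscr{B}\subseteq\mathbb{N}^n$ be a finite set of exponents, and let $f^s_{\mathrm{ts}}$ denote the optimal value of $$\mathbf{P}^s_{\mathrm{ts}}:\quad\inf_{\mathbf{y}}\{L_{\mathbf{y}}(f):\ \mathbf{B}_{G^{(s)}}\circ\mathbf{M}_{\mathscr{B}}(\mathbf{y})\in\Pi_{G^{(s)}}(\mathbb{S}^+_{|\mathscr{B}|}),\ y_{\mathbf{0}}=1\},\qquad s\ge1,$$ and $f_{\mathrm{mom}}$ the optimal value of $\inf_{\mathbf{y}}\{L_{\mathbf{y}}(f):\mathbf{M}_{\mathscr{B}}(\mathbf{y})\succeq0,\ y_{\mathbf{0}}=1\}$. Then the sequence $(f^s_{\mathrm{ts}})_{s\ge1}$ is monotonically nondecreasing and $f^s_{\mathrm{ts}}\le f_{\mathrm{mom}}$ for all $s\ge1$.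
   Context: A graph is chordal if every cycle of length at least four has a chord; a chordal extension $G'$ of $G$ is a chordal graph on the same nodes containing all edges of $G$. For each graph $G$ a chordal extension $G'$ is fixed so that $G\subseteq H$ (inclusion of node and edge sets) implies $G'\subseteq H'$. For a graph $G$ with node set $V\subseteq\mathbb{N}^n$, $\operatorname{supp}(G)=\{\beta+\gamma:\beta=\gamma\in V\text{ or }\{\beta,\gamma\}\in E(G)\}$. $G^{\mathrm{tsp}}$ has nodes $\mathscr{B}$ and edges $\{\beta,\gamma\}$, $\beta\ne\gamma$, with $\beta+\gamma\in\mathscr{A}\cup2\mathscr{B}$. $G^{(0)}=G^{\mathrm{tsp}}$; for $s\ge1$, $F^{(s)}$ has nodes $\mathscr{B}$ and edges $\{\beta,\gamma\}$, $\beta\ne\gamma$, with $\beta+\gamma\in\operatorname{supp}(G^{(s-1)})$, and $G^{(s)}=(F^{(s)})'$. $L_{\mathbf{y}}(\sum f_\alpha\mathbf{x}^\alpha)=\sum f_\alpha y_\alpha$; $\mathbf{M}_{\mathscr{B}}(\mathbf{y})$ is indexed by $\mathscr{B}$ with $(\beta,\gamma)$-entry $y_{\beta+\gamma}$. For a graph $G$ on nodes $V$: $\mathbb{S}(G)$ is the set of symmetric matrices indexed by $V$ vanishing at $(\beta,\gamma)$ whenever $\beta\ne\gamma$ and $\{\beta,\gamma\}\notin E(G)$; $\Pi_G$ zeroes the off-pattern entries; $\Pi_G(\mathbb{S}^+_{|V|})=\{\Pi_G(\mathbf{Q}):\mathbf{Q}\succeq0\}$; $\mathbf{B}_G$ is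 the adjacency matrix of $G$ with unit diagonal; $\circ$ is the entrywise product. *)

theory Defs
  imports "HOL-Analysis.Analysis" "HOL-Library.Extended_Real"
begin

text \<open>A real polynomial is a
finitely supported coefficient function; a pseudo-moment vector y is any real
function on exponents.\<close>

type_synonym 'n expo = "nat ^ 'n"
type_synonym 'a graph = "'a set \<times> 'a set set"


definition supp_poly :: "('n::finite expo \<Rightarrow> real) \<Rightarrow> 'n expo set" where
  "supp_poly f = {\<alpha>. f \<alpha> \<noteq> 0}"

definition Ly :: "('n::finite expo \<Rightarrow> real) \<Rightarrow> ('n expo \<Rightarrow> real) \<Rightarrow> real" where
  "Ly y f = (\<Sum>\<alpha>\<in>supp_poly f. f \<alpha> * y \<alpha>)"

definition wf_graph :: "'a graph \<Rightarrow> bool" where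
  "wf_graph G \<longleftrightarrow> (\<forall>e\<in>snd G. \<exists>u v. u \<noteq> v \<and> u \<in> fst G \<and> v \<in> fst G \<and> e = {u, v})"

definition subgraph :: "'a graph \<Rightarrow> 'a graph \<Rightarrow> bool" where
  "subgraph G H \<longleftrightarrow> fst G \<subseteq> fst H \<and> snd G \<subseteq> snd H"

definition chordal :: "'a graph \<Rightarrow> bool" where
  "chordal G \<longleftrightarrow>
     (\<forall>cs. distinct cs \<and> 4 \<le> length cs \<and> set cs \<subseteq> fst G \<and>
           (\<forall>i<length cs. {cs ! i, cs ! ((i + 1) mod length cs)} \<in> snd G)
       \<longrightarrow> (\<exists>i<length cs. \<exists>j<length cs. i \<noteq> j \<and> j \<noteq> (i + 1) mod length cs \<and>
                i \<noteq> (j + 1) mod length cs \<and> {cs ! i, cs ! j} \<in> snd G))"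

definition chordal_extension :: "'a graph \<Rightarrow> 'a graph \<Rightarrow> bool" where
  "chordal_extension G H \<longleftrightarrow> fst H = fst G \<and> snd G \<subseteq> snd H \<and> wf_graph H \<and> chordal H"

definition chordal_ext_op :: "('a graph \<Rightarrow> 'a graph) \<Rightarrow> bool" where
  "chordal_ext_op ext \<longleftrightarrow>
     (\<forall>G. wf_graph G \<longrightarrow> chordal_extension G (ext G)) \<and>
     (\<forall>G H. wf_graph G \<and> wf_graph H \<and> subgraph G H \<longrightarrow> subgraph (ext G) (ext H))"

definition gsupp :: "('n::finite) expo graph \<Rightarrow> 'n expo set" where
  "gsupp G = {b + c | b c. (b = c \<and> b \<in> fst G) \<or> {b, c} \<in> snd G}"

definition tsp_graph :: "('n::finite) expo set \<Rightarrow> 'n expo set \<Rightarrow> 'n expo graph" where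
  "tsp_graph A B = (B, {{b, c} | b c. b \<in> B \<and> c \<in> B \<and> b \<noteq> c \<and>
                         b + c \<in> A \<union> (\<lambda>d. d + d) ` B})"

definition next_F :: "('n::finite) expo set \<Rightarrow> 'n expo graph \<Rightarrow> 'n expo graph" where
  "next_F B G = (B, {{b, c} | b c. b \<in> B \<and> c \<in> B \<and> b \<noteq> c \<and> b + c \<in> gsupp G})"

primrec ts_graph :: "('n::finite expo graph \<Rightarrow> 'n expo graph) \<Rightarrow> 'n expo set \<Rightarrow> 'n expo set
                      \<Rightarrow> nat \<Rightarrow> 'n expo graph" where
  "ts_graph ext A B 0 = tsp_graph A B"
| "ts_graph ext A B (Suc s) = ext (next_F B (ts_graph ext A B s))"

definition psd_on :: "'a set \<Rightarrow> ('a \<Rightarrow> 'a \<Rightarrow> real) \<Rightarrow> bool" where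
  "psd_on I Q \<longleftrightarrow> (\<forall>i\<in>I. \<forall>j\<in>I. Q i j = Q j i) \<and>
                   (\<forall>x. 0 \<le> (\<Sum>i\<in>I. \<Sum>j\<in>I. x i * Q i j * x j))"

definition in_pattern :: "'a graph \<Rightarrow> 'a \<Rightarrow> 'a \<Rightarrow> bool" where
  "in_pattern G b c \<longleftrightarrow> b \<in> fst G \<and> c \<in> fst G \<and> (b = c \<or> {b, c} \<in> snd G)"

definition proj_G :: "'a graph \<Rightarrow> ('a \<Rightarrow> 'a \<Rightarrow> real) \<Rightarrow> 'a \<Rightarrow> 'a \<Rightarrow> real" where
  "proj_G G Q = (\<lambda>b c. if in_pattern G b c then Q b c else 0)"

definition proj_psd :: "'a graph \<Rightarrow> ('a \<Rightarrow> 'a \<Rightarrow> real) set" where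
  "proj_psd G = {proj_G G Q | Q. psd_on (fst G) Q}"

definition adjB :: "'a graph \<Rightarrow> 'a \<Rightarrow> 'a \<Rightarrow> real" where
  "adjB G = (\<lambda>b c. if in_pattern G b c then 1 else 0)"

definition hadamard :: "('a \<Rightarrow> 'a \<Rightarrow> real) \<Rightarrow> ('a \<Rightarrow> 'a \<Rightarrow> real) \<Rightarrow> 'a \<Rightarrow> 'a \<Rightarrow> real" where
  "hadamard P Q = (\<lambda>b c. P b c * Q b c)"

definition mom_mat :: "('n::finite) expo set \<Rightarrow> ('n expo \<Rightarrow> real) \<Rightarrow> 'n expo \<Rightarrow> 'n expo \<Rightarrow> real" where
  "mom_mat B y = (\<lambda>b c. if b \<in> B \<and> c \<in> B then y (b + c) else 0)"

definition f_ts :: "('n::finite expo graph \<Rightarrow> 'n expo graph) \<Rightarrow> ('n expo \<Rightarrow> real)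
                    \<Rightarrow> 'n expo set \<Rightarrow> nat \<Rightarrow> ereal" where
  "f_ts ext f B s = Inf {ereal (Ly y f) | y.
      hadamard (adjB (ts_graph ext (supp_poly f) B s)) (mom_mat B y)
        \<in> proj_psd (ts_graph ext (supp_poly f) B s) \<and> y 0 = 1}"

definition f_mom :: "('n::finite expo \<Rightarrow> real) \<Rightarrow> 'n expo set \<Rightarrow> ereal" where
  "f_mom f B = Inf {ereal (Ly y f) | y. psd_on B (mom_mat B y) \<and> y 0 = 1}"

end

theory Submission
  imports Defs
begin

text \<open>Enlarging the sparsity pattern on a fixed node set only strengthens the constraint of
the relaxation: a PSD matrix witnessing feasibility for a pattern \<open>H\<close> also witnesses it
for every pattern with fewer edges, and a PSD moment matrix is its own witness for every
pattern. The graphs \<open>ts_graph ext A B s\<close> grow with \<open>s\<close>, because the support of a graph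
and the chosen chordal extension are both monotone. Hence the feasible sets shrink as \<open>s\<close>
grows and all contain the feasible set of the moment relaxation, so their infima increase
and stay below \<open>f_mom\<close>.\<close>

lemma hadamard_adjB_in_proj_psd_edge_subset:
  assumes "fst G = fst H" "snd G \<subseteq> snd H"
    and "hadamard (adjB H) M \<in> proj_psd H"
  shows "hadamard (adjB G) M \<in> proj_psd G"
proof -
  obtain Q where Q: "hadamard (adjB H) M = proj_G H Q" "psd_on (fst H) Q"
    using assms(3) unfolding proj_psd_def by blast
  have pattern_mono: "in_pattern G b c \<Longrightarrow> in_pattern H b c" for b c
    using assms(1,2) unfolding in_pattern_def by auto
  have "hadamard (adjB G) M = proj_G G Q"
  proof (intro ext)
    fix b c
    have "hadamard (adjB H) M b c = proj_G H Q b c"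
      using Q(1) by simp
    then show "hadamard (adjB G) M b c = proj_G G Q b c"
      using pattern_mono[of b c] unfolding hadamard_def adjB_def proj_G_def by auto
  qed
  then show ?thesis
    using Q(2) assms(1) unfolding proj_psd_def by auto
qed

lemma psd_on_imp_hadamard_adjB_in_proj_psd:
  assumes "psd_on (fst G) M"
  shows "hadamard (adjB G) M \<in> proj_psd G"
proof -
  have "hadamard (adjB G) M = proj_G G M"
    unfolding hadamard_def adjB_def proj_G_def by (intro ext) auto
  then show ?thesis
    using assms unfolding proj_psd_def by auto
qed

lemma gsupp_mono: "subgraph G H \<Longrightarrow> gsupp G \<subseteq> gsupp H"
  unfolding gsupp_def subgraph_def by blast

lemma wf_graph_next_F: "wf_graph (next_F B G)"
  unfolding wf_graph_def next_F_def by auto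

lemma next_F_mono: "subgraph G H \<Longrightarrow> subgraph (next_F B G) (next_F B H)"
  using gsupp_mono[of G H] unfolding subgraph_def next_F_def by auto

lemma subgraph_tsp_graph_next_F: "subgraph (tsp_graph A B) (next_F B (tsp_graph A B))"
  unfolding subgraph_def next_F_def gsupp_def tsp_graph_def by auto blast

lemma subgraph_trans: "subgraph G H \<Longrightarrow> subgraph H K \<Longrightarrow> subgraph G K"
  unfolding subgraph_def by blast

lemma chordal_ext_op_extends:
  assumes "chordal_ext_op ext" "wf_graph G"
  shows "fst (ext G) = fst G" "subgraph G (ext G)"
proof -
  have "chordal_extension G (ext G)"
    using assms unfolding chordal_ext_op_def by blast
  then show "fst (ext G) = fst G" "subgraph G (ext G)"
    unfolding chordal_extension_def subgraph_def by simp_all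
qed

lemma chordal_ext_op_mono:
  assumes "chordal_ext_op ext" "wf_graph G" "wf_graph H" "subgraph G H"
  shows "subgraph (ext G) (ext H)"
  using assms unfolding chordal_ext_op_def by blast

lemma fst_ts_graph:
  assumes "chordal_ext_op ext"
  shows "fst (ts_graph ext A B s) = B"
  using chordal_ext_op_extends(1)[OF assms wf_graph_next_F]
  by (cases s) (simp_all add: tsp_graph_def next_F_def)

lemma ts_graph_subgraph_Suc:
  assumes "chordal_ext_op ext"
  shows "subgraph (ts_graph ext A B s) (ts_graph ext A B (Suc s))"
proof (induction s)
  case 0
  show ?case
    using subgraph_trans[OF subgraph_tsp_graph_next_F
        chordal_ext_op_extends(2)[OF assms wf_graph_next_F]] by simp
next
  case (Suc s)
  then have "subgraph (next_F B (ts_graph ext A B s)) (next_F B (ts_graph ext A B (Suc s)))"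
    by (rule next_F_mono)
  then show ?case
    using chordal_ext_op_mono[OF assms wf_graph_next_F wf_graph_next_F] by simp
qed

lemma f_ts_le_Suc:
  assumes "chordal_ext_op ext"
  shows "f_ts ext f B s \<le> f_ts ext f B (Suc s)"
  unfolding f_ts_def
proof (rule Inf_superset_mono, safe)
  let ?G = "ts_graph ext (supp_poly f) B"
  fix y
  assume feasible: "hadamard (adjB (?G (Suc s))) (mom_mat B y) \<in> proj_psd (?G (Suc s))"
    and "y 0 = 1"
  have "fst (?G s) = fst (?G (Suc s))"
    by (simp only: fst_ts_graph[OF assms])
  moreover have "snd (?G s) \<subseteq> snd (?G (Suc s))"
    using ts_graph_subgraph_Suc[OF assms] unfolding subgraph_def by blast
  ultimately have "hadamard (adjB (?G s)) (mom_mat B y) \<in> proj_psd (?G s)"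
    using feasible by (rule hadamard_adjB_in_proj_psd_edge_subset)
  with \<open>y 0 = 1\<close> show "\<exists>y'. ereal (Ly y f) = ereal (Ly y' f) \<and>
      hadamard (adjB (?G s)) (mom_mat B y') \<in> proj_psd (?G s) \<and> y' 0 = 1"
    by blast
qed

lemma f_ts_le_f_mom:
  assumes "chordal_ext_op ext"
  shows "f_ts ext f B s \<le> f_mom f B"
  unfolding f_ts_def f_mom_def
proof (rule Inf_superset_mono, safe)
  let ?G = "ts_graph ext (supp_poly f) B s"
  fix y
  assume "psd_on B (mom_mat B y)" and "y 0 = 1"
  then have "psd_on (fst ?G) (mom_mat B y)"
    by (simp only: fst_ts_graph[OF assms])
  then have "hadamard (adjB ?G) (mom_mat B y) \<in> proj_psd ?G"
    by (rule psd_on_imp_hadamard_adjB_in_proj_psd)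
  with \<open>y 0 = 1\<close> show "\<exists>y'. ereal (Ly y f) = ereal (Ly y' f) \<and>
      hadamard (adjB ?G) (mom_mat B y') \<in> proj_psd ?G \<and> y' 0 = 1"
    by blast
qed

theorem theorem7p2:
  fixes f :: "nat ^ 'n \<Rightarrow> real"
    and B :: "(nat ^ 'n) set"
    and ext :: "(nat ^ 'n) graph \<Rightarrow> (nat ^ 'n) graph"
  assumes "finite (supp_poly f)"
    and "finite B"
    and "chordal_ext_op ext"
  shows "(\<forall>s\<ge>1. f_ts ext f B s \<le> f_ts ext f B (Suc s))
         \<and> (\<forall>s\<ge>1. f_ts ext f B s \<le> f_mom f B)"
  by (simp add: f_ts_le_Suc[OF assms(3)] f_ts_le_f_mom[OF assms(3)])

end
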